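(* Let $L$ be an $R_0$-algebra and $k\in[0,1)$. If $\mu$ is an $(\in,\in\vee q_k)$-fuzzy fated filter of $L$, then for every $t\in(\tfrac{1-k}{2},1]$ the set $Q_k(\mu;t)=\{x\in L\mid \mu(x)+t+k>1\}$ is either empty or a fated filter of $L$.
   Context: An $R_0$-algebra is a bounded distributive lattice $(L,\wedge,\vee,0,1)$ with an order-reversing involution $\neg$ and a binary operation $\to$ such that for all $x,y,z\in L$: $x\to y=\neg y\to\neg x$; $1\to x=x$; $(y\to z)\wedge((x\to y)\to(x\to z))=y\to z$; $x\to(y\to z)=y\to(x\to z)$; $x\to(y\vee z)=(x\to y)\vee(x\to z)$; $(x\to y)\vee((x\to y)\to(\neg x\vee y))=1$. A fated filter of $L$ is a nonempty subset $A\subseteq L$ with $1\in A$ such that for all $x,y\in L$ and $a\in A$, $a\to((x\to y)\to x)\in A$ implies $x\in A$. For $x\in L$, $t\in(0,1]$ and a fuzzy subset $\mu:L\to[0,1]$: $x_t\in\mu$ iff $\mu(x)\ge t$; $x_t\,q_k\,\mu$ iff $\mu(x)+t+k>1$; $x_t\in\vee q_k\,\mu$ iff $x_t\in\mu$ or $x_t\,q_k\,\mu$. $\mu$ is an $(\in,\in\vee q_k)$-fuzzy fated filter of $L$ if (1) for all $x\in L$, $t\in(0,1]$: $x_t\in\mu\Rightarrow 1_t\in\vee q_k\,\mu$; and (2) for all $x,a,y\in L$, $t,s\in(0,1]$: if $(a\to((x\to y)\to x))_t\in\mu$ and $a_s\in\mu$ then $x_{\min\{t,s\}}\in\vee q_k\,\mu$.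 *)

theory Defs
  imports Complex_Main
begin

definition R0_algebra :: "('a::{bounded_lattice,distrib_lattice} \<Rightarrow> 'a) \<Rightarrow> ('a \<Rightarrow> 'a \<Rightarrow> 'a) \<Rightarrow> bool" where
  "R0_algebra neg imp \<longleftrightarrow>
     (\<forall>x. neg (neg x) = x) \<and>
     (\<forall>x y. x \<le> y \<longrightarrow> neg y \<le> neg x) \<and>
     (\<forall>x y. imp x y = imp (neg y) (neg x)) \<and>
     (\<forall>x. imp top x = x) \<and>
     (\<forall>x y z. inf (imp y z) (imp (imp x y) (imp x z)) = imp y z) \<and>
     (\<forall>x y z. imp x (imp y z) = imp y (imp x z)) \<and>
     (\<forall>x y z. imp x (sup y z) = sup (imp x y) (imp x z)) \<and>
     (\<forall>x y. sup (imp x y) (imp (imp x y) (sup (neg x) y)) = top)"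

definition fated_filter :: "('a::bounded_lattice \<Rightarrow> 'a \<Rightarrow> 'a) \<Rightarrow> 'a set \<Rightarrow> bool" where
  "fated_filter imp A \<longleftrightarrow> A \<noteq> {} \<and> top \<in> A \<and>
     (\<forall>x y a. a \<in> A \<longrightarrow> imp a (imp (imp x y) x) \<in> A \<longrightarrow> x \<in> A)"

definition fz_in :: "'a \<Rightarrow> real \<Rightarrow> ('a \<Rightarrow> real) \<Rightarrow> bool" where
  "fz_in x t \<mu> \<longleftrightarrow> \<mu> x \<ge> t"

definition fz_q :: "real \<Rightarrow> 'a \<Rightarrow> real \<Rightarrow> ('a \<Rightarrow> real) \<Rightarrow> bool" where
  "fz_q k x t \<mu> \<longleftrightarrow> \<mu> x + t + k > 1"

definition fz_in_or_q :: "real \<Rightarrow> 'a \<Rightarrow> real \<Rightarrow> ('a \<Rightarrow> real) \<Rightarrow> bool" where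
  "fz_in_or_q k x t \<mu> \<longleftrightarrow> fz_in x t \<mu> \<or> fz_q k x t \<mu>"

definition fuzzy_subset :: "('a \<Rightarrow> real) \<Rightarrow> bool" where
  "fuzzy_subset \<mu> \<longleftrightarrow> (\<forall>x. 0 \<le> \<mu> x \<and> \<mu> x \<le> 1)"

definition in_inq_fuzzy_fated_filter ::
  "real \<Rightarrow> ('a::bounded_lattice \<Rightarrow> 'a \<Rightarrow> 'a) \<Rightarrow> ('a \<Rightarrow> real) \<Rightarrow> bool" where
  "in_inq_fuzzy_fated_filter k imp \<mu> \<longleftrightarrow> fuzzy_subset \<mu> \<and>
     (\<forall>x t. 0 < t \<and> t \<le> 1 \<longrightarrow> fz_in x t \<mu> \<longrightarrow> fz_in_or_q k top t \<mu>) \<and>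
     (\<forall>x a y t s. 0 < t \<and> t \<le> 1 \<and> 0 < s \<and> s \<le> 1 \<longrightarrow>
        fz_in (imp a (imp (imp x y) x)) t \<mu> \<longrightarrow> fz_in a s \<mu> \<longrightarrow>
        fz_in_or_q k x (min t s) \<mu>)"

definition Q_set :: "real \<Rightarrow> ('a \<Rightarrow> real) \<Rightarrow> real \<Rightarrow> 'a set" where
  "Q_set k \<mu> t = {x. fz_q k x t \<mu>}"

end

theory Submission
  imports Defs
begin

text \<open>Put \<open>h = (1 - k)/2\<close>. For levels \<open>s \<le> h\<close>, the condition \<open>x\<^sub>s \<in>\<or>q\<^sub>k \<mu>\<close> collapses
  to \<open>x\<^sub>s \<in> \<mu>\<close>, because \<open>\<mu> x + s + k > 1\<close> with \<open>\<mu> x < s\<close> would force \<open>2s + k > 1\<close>.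
  So the truncation \<open>min (\<mu> x) h\<close> satisfies the crisp fated-filter inequalities
  \<open>min (\<mu> 1) h \<ge> min (\<mu> x) h\<close> and \<open>min (\<mu> x) h \<ge> min (min (\<mu> a) (\<mu> (a \<rightarrow> ((x \<rightarrow> y) \<rightarrow> x)))) h\<close>.
  For \<open>t > h\<close> the level set \<open>Q\<^sub>k(\<mu>;t)\<close> is determined by this truncation, since
  \<open>h + t + k > 1\<close>; so it inherits the fated-filter property whenever it contains an element.
  None of the R0-algebra axioms is needed, nor \<open>k < 1\<close>.\<close>

lemma fz_in_if_fz_in_or_q_below_half:
  assumes "s \<le> (1 - k) / 2" and "fz_in_or_q k x s \<mu>"
  shows "fz_in x s \<mu>"
  using assms unfolding fz_in_or_q_def fz_in_def fz_q_def by (auto simp: field_simps)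

lemma in_inq_fuzzy_fated_filter_top_ge:
  assumes "in_inq_fuzzy_fated_filter k imp \<mu>" and "0 \<le> k"
  shows "min (\<mu> x) ((1 - k) / 2) \<le> \<mu> top"
proof -
  define s where "s = min (\<mu> x) ((1 - k) / 2)"
  have nonneg: "0 \<le> \<mu> top"
    using assms(1) unfolding in_inq_fuzzy_fated_filter_def fuzzy_subset_def by blast
  show ?thesis
  proof (cases "s \<le> 0")
    case True
    with nonneg show ?thesis by (simp add: s_def)
  next
    case False
    then have "0 < s" "s \<le> 1" "fz_in x s \<mu>"
      using assms(2) unfolding s_def fz_in_def by (auto simp: min_le_iff_disj)
    then have "fz_in_or_q k top s \<mu>"
      using assms(1) unfolding in_inq_fuzzy_fated_filter_def by blast
    moreover have "s \<le> (1 - k) / 2" unfolding s_def by linarith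
    ultimately have "fz_in top s \<mu>" by (rule fz_in_if_fz_in_or_q_below_half[rotated])
    then show ?thesis by (simp add: s_def fz_in_def)
  qed
qed

lemma in_inq_fuzzy_fated_filter_mp_ge:
  assumes "in_inq_fuzzy_fated_filter k imp \<mu>" and "0 \<le> k"
  shows "min (min (\<mu> (imp a (imp (imp x y) x))) (\<mu> a)) ((1 - k) / 2) \<le> \<mu> x"
proof -
  define s where "s = min (min (\<mu> (imp a (imp (imp x y) x))) (\<mu> a)) ((1 - k) / 2)"
  have nonneg: "0 \<le> \<mu> x"
    using assms(1) unfolding in_inq_fuzzy_fated_filter_def fuzzy_subset_def by blast
  show ?thesis
  proof (cases "s \<le> 0")
    case True
    with nonneg show ?thesis by (simp add: s_def)
  next
    case False
    then have "0 < s" "s \<le> 1" "fz_in (imp a (imp (imp x y) x)) s \<mu>" "fz_in a s \<mu>"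
      using assms(2) unfolding s_def fz_in_def by (auto simp: min_le_iff_disj)
    then have "fz_in_or_q k x (min s s) \<mu>"
      using assms(1) unfolding in_inq_fuzzy_fated_filter_def by blast
    moreover have "s \<le> (1 - k) / 2" unfolding s_def by linarith
    ultimately have "fz_in x s \<mu>" by (simp add: fz_in_if_fz_in_or_q_below_half)
    then show ?thesis by (simp add: s_def fz_in_def)
  qed
qed

lemma Q_set_iff_truncation:
  assumes "(1 - k) / 2 < t"
  shows "x \<in> Q_set k \<mu> t \<longleftrightarrow> min (\<mu> x) ((1 - k) / 2) + t + k > 1"
  using assms unfolding Q_set_def fz_q_def by (auto simp: min_def field_simps)

theorem theorem3p20:
  fixes neg :: "'a::{bounded_lattice,distrib_lattice} \<Rightarrow> 'a"
    and imp :: "'a \<Rightarrow> 'a \<Rightarrow> 'a"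
    and \<mu> :: "'a \<Rightarrow> real" and k :: real
  assumes "R0_algebra neg imp"
    and "0 \<le> k" and "k < 1"
    and "in_inq_fuzzy_fated_filter k imp \<mu>"
  shows "\<forall>t. (1 - k) / 2 < t \<and> t \<le> 1 \<longrightarrow>
           Q_set k \<mu> t = {} \<or> fated_filter imp (Q_set k \<mu> t)"
proof (intro allI impI)
  fix t assume t: "(1 - k) / 2 < t \<and> t \<le> 1"
  note Q_iff = Q_set_iff_truncation[OF conjunct1[OF t]]
  note top_ge = in_inq_fuzzy_fated_filter_top_ge[OF assms(4,2)]
  note mp_ge = in_inq_fuzzy_fated_filter_mp_ge[OF assms(4,2)]
  have top_mem: "top \<in> Q_set k \<mu> t" if "x \<in> Q_set k \<mu> t" for x
    using that top_ge[of x] unfolding Q_iff by linarith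
  have mp_mem: "x \<in> Q_set k \<mu> t"
    if "a \<in> Q_set k \<mu> t" and "imp a (imp (imp x y) x) \<in> Q_set k \<mu> t" for x y a
    using that mp_ge[of a x y] unfolding Q_iff by linarith
  show "Q_set k \<mu> t = {} \<or> fated_filter imp (Q_set k \<mu> t)"
    unfolding fated_filter_def using top_mem mp_mem by blast
qed

end
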